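(* Let $x,y,z$ be indeterminates over the field $\mathbb{Q}$ of rational numbers. The Krull domain $R=\mathbb{Q}[x,y,zx,zy]$ (the subring of $\mathbb{Q}[x,y,z]$ generated over $\mathbb{Q}$ by $x,y,zx,zy$) is not a half-factorial domain.
   Context: A half-factorial domain is an atomic domain in which any two factorizations of a nonzero nonunit into irreducible elements have the same number of factors. *)

theory Defs
  imports "HOL-Computational_Algebra.Polynomial"
begin

text \<open>The polynomial ring Q[x,y,z] is represented as nested univariate polynomials
  ((Q[x])[y])[z], i.e. the type rat poly poly poly.\<close>

type_synonym qxyz = "rat poly poly poly"

definition const3 :: "rat \<Rightarrow> qxyz" where
  "const3 c = [:[:[:c:]:]:]"

definition var_x :: qxyz where "var_x = [:[:[:0, 1:]:]:]"
definition var_y :: qxyz where "var_y = [:[:0, 1:]:]"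
definition var_z :: qxyz where "var_z = [:0, 1:]"

inductive_set R_ring :: "qxyz set" where
  const: "const3 c \<in> R_ring"
| gen_x: "var_x \<in> R_ring"
| gen_y: "var_y \<in> R_ring"
| gen_zx: "var_z * var_x \<in> R_ring"
| gen_zy: "var_z * var_y \<in> R_ring"
| add: "a \<in> R_ring \<Longrightarrow> b \<in> R_ring \<Longrightarrow> a + b \<in> R_ring"
| mult: "a \<in> R_ring \<Longrightarrow> b \<in> R_ring \<Longrightarrow> a * b \<in> R_ring"

definition unit_in :: "'a::idom set \<Rightarrow> 'a \<Rightarrow> bool" where
  "unit_in S u \<longleftrightarrow> u \<in> S \<and> (\<exists>v\<in>S. u * v = 1)"

definition irreducible_in :: "'a::idom set \<Rightarrow> 'a \<Rightarrow> bool" where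
  "irreducible_in S a \<longleftrightarrow> a \<in> S \<and> a \<noteq> 0 \<and> \<not> unit_in S a \<and>
     (\<forall>b\<in>S. \<forall>c\<in>S. a = b * c \<longrightarrow> unit_in S b \<or> unit_in S c)"

definition atomic_in :: "'a::idom set \<Rightarrow> bool" where
  "atomic_in S \<longleftrightarrow> (\<forall>a\<in>S. a \<noteq> 0 \<and> \<not> unit_in S a \<longrightarrow>
     (\<exists>fs. fs \<noteq> [] \<and> (\<forall>f\<in>set fs. irreducible_in S f) \<and> prod_list fs = a))"

definition half_factorial_in :: "'a::idom set \<Rightarrow> bool" where
  "half_factorial_in S \<longleftrightarrow> atomic_in S \<and>
     (\<forall>a\<in>S. a \<noteq> 0 \<and> \<not> unit_in S a \<longrightarrow>
       (\<forall>fs gs. (\<forall>f\<in>set fs. irreducible_in S f) \<and> (\<forall>g\<in>set gs. irreducible_in S g)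
          \<and> prod_list fs = a \<and> prod_list gs = a \<longrightarrow> length fs = length gs))"

end

theory Submission
  imports Defs "HOL-Computational_Algebra.Polynomial_Factorial" "HOL-Computational_Algebra.Field_as_Ring"
begin

text \<open>Work in the factorial ring \<open>\<rat>[x,y,z]\<close> with the primes \<open>P = x\<^sup>2 + y\<^sup>3z\<close> and
  \<open>N = z\<^sup>2 + y\<close>. The element \<open>(PN)(zx)(zx) = (z\<^sup>2P)(x\<^sup>2N)\<close> of \<open>R\<close> has factorizations of
  lengths 3 and 2, and all five factors are irreducible in \<open>R\<close>. Every monomial
  \<open>x\<^sup>ay\<^sup>bz\<^sup>c\<close> occurring in an element of \<open>R\<close> satisfies \<open>c \<le> a + b\<close>, which keeps \<open>z\<close>,
  \<open>z\<^sup>2\<close>, \<open>N\<close> and \<open>xN\<close> out of \<open>R\<close>. As the units of \<open>R\<close> are the nonzero rationals, a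
  factorization in \<open>R\<close> of a product of two prime powers \<open>p\<^sup>mq\<^sup>n\<close> splits its prime factors,
  and for each of the four factors every proper splitting leaves one part outside \<open>R\<close>.\<close>

lemma prime_elem_power_factor_split:
  fixes p :: "'a :: idom"
  assumes "prime_elem p" "b * c = p ^ m * a"
  shows "\<exists>i\<le>m. \<exists>b' c'. b = p ^ i * b' \<and> c = p ^ (m - i) * c' \<and> b' * c' = a"
  using assms(2)
proof (induction m arbitrary: b c)
  case 0
  then show ?case by auto
next
  case (Suc m)
  have p0: "p \<noteq> 0" using assms(1) by auto
  have "p dvd b * c" using Suc.prems by simp
  then consider b0 where "b = p * b0" | c0 where "c = p * c0"
    using assms(1) prime_elem_dvd_mult_iff by (metis dvdE)
  then show ?case
  proof cases
    case 1
    with Suc.prems p0 have "b0 * c = p ^ m * a" by (simp add: mult.assoc)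
    from Suc.IH[OF this] obtain i b' c'
      where "i \<le> m" "b0 = p ^ i * b'" "c = p ^ (m - i) * c'" "b' * c' = a"
      by blast
    with 1 show ?thesis by (intro exI[of _ "Suc i"]) auto
  next
    case 2
    with Suc.prems p0 have "b * c0 = p ^ m * a" by (simp add: ac_simps)
    from Suc.IH[OF this] obtain i b' c'
      where "i \<le> m" "b = p ^ i * b'" "c0 = p ^ (m - i) * c'" "b' * c' = a"
      by blast
    with 2 show ?thesis by (intro exI[of _ i]) (auto simp: Suc_diff_le)
  qed
qed

lemma prime_elem_powers_factor_split:
  fixes p q :: "'a :: {idom, algebraic_semidom}"
  assumes "prime_elem p" "prime_elem q" "b * c = p ^ m * q ^ n"
  shows "\<exists>i\<le>m. \<exists>j\<le>n. \<exists>u v. is_unit u \<and> is_unit v \<and>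
           b = u * (p ^ i * q ^ j) \<and> c = v * (p ^ (m - i) * q ^ (n - j))"
proof -
  from prime_elem_power_factor_split[OF assms(1,3)] obtain i b' c'
    where i: "i \<le> m" "b = p ^ i * b'" "c = p ^ (m - i) * c'" "b' * c' = q ^ n"
    by blast
  from i(4) have "b' * c' = q ^ n * 1" by simp
  from prime_elem_power_factor_split[OF assms(2) this] obtain j u v
    where j: "j \<le> n" "b' = q ^ j * u" "c' = q ^ (n - j) * v" "u * v = 1"
    by blast
  from j(4) have "is_unit u" "is_unit v" by (metis is_unit_mult_iff one_dvd)+
  with i j show ?thesis
    by (intro exI[of _ i] conjI exI[of _ j] exI[of _ u] exI[of _ v]) (simp_all add: ac_simps)
qed

lemma poly_degree_one_unit_root:
  fixes a :: "'a :: {idom, algebraic_semidom} poly"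
  assumes "degree a = 1" "is_unit (lead_coeff a)"
  shows "poly a (- (coeff a 0 div lead_coeff a)) = 0"
  using assms by (simp add: poly_altdef unit_imp_dvd)

lemma square_plus_var_nonzero: "(r :: 'a :: idom poly) ^ 2 + [:0, 1:] \<noteq> 0"
proof
  assume "r ^ 2 + [:0, 1:] = 0"
  then have "degree ([:0, 1:] :: 'a poly) = degree (r ^ 2)"
    by (metis add_eq_0_iff degree_minus)
  moreover have "r \<noteq> 0" using \<open>r ^ 2 + [:0, 1:] = 0\<close> by auto
  ultimately show False by (simp add: degree_power_eq)
qed

lemma prod_list_mem_if_mult_closed:
  fixes S :: "'a :: monoid_mult set"
  assumes "1 \<in> S" "\<And>a b. a \<in> S \<Longrightarrow> b \<in> S \<Longrightarrow> a * b \<in> S" "set xs \<subseteq> S"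
  shows "prod_list xs \<in> S"
  using assms(3) by (induction xs) (simp_all add: assms(1,2))

lemma not_half_factorial_in_if_lengths_differ:
  fixes S :: "'a :: idom set"
  assumes "1 \<in> S" and mult_closed: "\<And>a b. a \<in> S \<Longrightarrow> b \<in> S \<Longrightarrow> a * b \<in> S"
    and irr: "\<forall>f\<in>set fs. irreducible_in S f" "\<forall>g\<in>set gs. irreducible_in S g"
    and "fs \<noteq> []" and same_product: "prod_list fs = prod_list gs"
    and lengths_differ: "length fs \<noteq> length gs"
  shows "\<not> half_factorial_in S"
proof -
  have in_S: "set fs \<subseteq> S" using irr(1) by (auto simp: irreducible_in_def)
  obtain f fs' where fs: "fs = f # fs'" using \<open>fs \<noteq> []\<close> by (cases fs) auto
  have "prod_list fs \<noteq> 0" using irr(1) by (auto simp: irreducible_in_def prod_list_zero_iff)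
  moreover have "\<not> unit_in S (prod_list fs)"
  proof
    assume "unit_in S (prod_list fs)"
    then obtain v where "v \<in> S" "f * (prod_list fs' * v) = 1"
      by (auto simp: unit_in_def fs mult.assoc)
    moreover have "prod_list fs' * v \<in> S"
      using in_S \<open>v \<in> S\<close>
      by (intro mult_closed prod_list_mem_if_mult_closed assms(1)) (auto simp: fs)
    ultimately have "unit_in S f" using in_S by (auto simp: unit_in_def fs)
    then show False using irr(1) by (auto simp: irreducible_in_def fs)
  qed
  moreover have "prod_list fs \<in> S"
    using in_S by (intro prod_list_mem_if_mult_closed assms(1) mult_closed)
  ultimately show ?thesis
    using same_product lengths_differ irr unfolding half_factorial_in_def by metis
qed

definition P :: qxyz where "P = var_x ^ 2 + var_y ^ 3 * var_z"
definition N :: qxyz where "N = var_z ^ 2 + var_y"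

lemma N_eq: "N = [:[:0, 1:], 0, 1:]"
  by (simp add: N_def var_z_def var_y_def power2_eq_square)

lemma is_unit_qxyz_imp_const3: "is_unit (u :: qxyz) \<Longrightarrow> \<exists>k. k \<noteq> 0 \<and> u = const3 k"
  by (auto simp: const3_def is_unit_poly_iff)

lemma one_in_R_ring: "1 \<in> R_ring"
  using R_ring.const[of 1] by (simp add: const3_def one_pCons)

lemma mult_unit_in_R_ring_iff:
  assumes "is_unit u"
  shows "u * s \<in> R_ring \<longleftrightarrow> s \<in> R_ring"
proof -
  obtain k where k: "k \<noteq> 0" "u = const3 k" using is_unit_qxyz_imp_const3[OF assms] by blast
  have "s = const3 (1 / k) * (u * s)" using k by (simp add: const3_def mult.assoc flip: one_pCons)
  then show ?thesis using k R_ring.const R_ring.mult by metis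
qed

lemma unit_in_R_ring_iff: "unit_in R_ring u \<longleftrightarrow> is_unit u"
proof
  assume "is_unit u"
  then have "u \<in> R_ring" "1 div u \<in> R_ring"
    using mult_unit_in_R_ring_iff[of u 1] mult_unit_in_R_ring_iff[of u "1 div u"] one_in_R_ring
    by simp_all
  with \<open>is_unit u\<close> show "unit_in R_ring u"
    by (auto simp: unit_in_def intro!: bexI[of _ "1 div u"])
qed (auto simp: unit_in_def intro: dvdI)

text \<open>\<open>coeff (coeff f c) b\<close> is the coefficient of \<open>y\<^sup>bz\<^sup>c\<close> in \<open>f\<close>, a polynomial in \<open>x\<close>; so the
  condition says that every monomial \<open>x\<^sup>ay\<^sup>bz\<^sup>c\<close> of \<open>f\<close> has \<open>c \<le> a + b\<close>.\<close>

definition zdeg_bounded :: "qxyz \<Rightarrow> bool" where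
  "zdeg_bounded f \<longleftrightarrow> (\<forall>c b. [:0, 1:] ^ (c - b) dvd coeff (coeff f c) b)"

lemma zdeg_bounded_add: "zdeg_bounded f \<Longrightarrow> zdeg_bounded g \<Longrightarrow> zdeg_bounded (f + g)"
  unfolding zdeg_bounded_def by simp

lemma zdeg_bounded_mult:
  assumes "zdeg_bounded f" "zdeg_bounded g"
  shows "zdeg_bounded (f * g)"
  unfolding zdeg_bounded_def
proof (intro allI)
  fix c b
  have "coeff (coeff (f * g) c) b =
      (\<Sum>i\<le>c. \<Sum>j\<le>b. coeff (coeff f i) j * coeff (coeff g (c - i)) (b - j))"
    by (simp add: coeff_mult coeff_sum)
  also have "[:0, 1:] ^ (c - b) dvd \<dots>"
  proof (intro dvd_sum)
    fix i j assume "i \<in> {..c}" "j \<in> {..b}"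
    then have "c - b \<le> (i - j) + ((c - i) - (b - j))" by auto
    then have "[:0, 1:] ^ (c - b) dvd [:0, 1:] ^ (i - j) * [:0, 1:] ^ ((c - i) - (b - j))"
      by (simp add: le_imp_power_dvd flip: power_add)
    also have "\<dots> dvd coeff (coeff f i) j * coeff (coeff g (c - i)) (b - j)"
      using assms unfolding zdeg_bounded_def by (blast intro: mult_dvd_mono)
    finally show "[:0, 1:] ^ (c - b) dvd coeff (coeff f i) j * coeff (coeff g (c - i)) (b - j)" .
  qed
  finally show "[:0, 1:] ^ (c - b) dvd coeff (coeff (f * g) c) b" .
qed

lemma zdeg_bounded_if_in_R_ring: "f \<in> R_ring \<Longrightarrow> zdeg_bounded f"
proof (induction rule: R_ring.induct)
  case (add a b) then show ?case by (simp add: zdeg_bounded_add)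
next
  case (mult a b) then show ?case by (simp add: zdeg_bounded_mult)
qed (auto simp: zdeg_bounded_def const3_def var_x_def var_y_def var_z_def coeff_pCons
          split: nat.split)

lemma not_in_R_ring_if_coeff:
  assumes "coeff (coeff f c) b = [:0, 1:] ^ k" "b + k < c"
  shows "f \<notin> R_ring"
proof
  assume "f \<in> R_ring"
  then have "[:0, 1:] ^ (c - b) dvd ([:0, 1:] :: rat poly) ^ k"
    using assms(1) zdeg_bounded_if_in_R_ring unfolding zdeg_bounded_def by metis
  then show False using assms(2) by (simp add: dvd_power_iff is_unit_poly_iff)
qed

lemma z_not_in_R_ring: "var_z \<notin> R_ring"
  by (rule not_in_R_ring_if_coeff[of _ 1 0 0]) (simp_all add: var_z_def)

lemma z_square_not_in_R_ring: "var_z ^ 2 \<notin> R_ring"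
  by (rule not_in_R_ring_if_coeff[of _ 2 0 0]) (simp_all add: var_z_def numeral_2_eq_2)

lemma N_not_in_R_ring: "N \<notin> R_ring"
  by (rule not_in_R_ring_if_coeff[of _ 2 0 0])
     (simp_all add: N_def var_z_def var_y_def numeral_2_eq_2)

lemma x_N_not_in_R_ring: "var_x * N \<notin> R_ring"
  by (rule not_in_R_ring_if_coeff[of _ 2 0 1])
     (simp_all add: N_def var_x_def var_z_def var_y_def numeral_2_eq_2)

lemma irreducible_in_R_ring_prime_powers:
  assumes p: "prime_elem p" and q: "prime_elem q"
    and in_R: "p ^ m * q ^ n \<in> R_ring" and "0 < m + n"
    and proper_factor_not_in_R: "\<And>i j. i \<le> m \<Longrightarrow> j \<le> n \<Longrightarrow> 0 < i + j \<Longrightarrow> i + j < m + n \<Longrightarrow>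
           p ^ i * q ^ j \<notin> R_ring \<or> p ^ (m - i) * q ^ (n - j) \<notin> R_ring"
  shows "irreducible_in R_ring (p ^ m * q ^ n)"
  unfolding irreducible_in_def unit_in_R_ring_iff
proof (intro conjI ballI impI in_R)
  show "p ^ m * q ^ n \<noteq> 0" using p q by auto
  show "\<not> is_unit (p ^ m * q ^ n)"
    using p q \<open>0 < m + n\<close> by (auto simp: is_unit_mult_iff is_unit_power_iff prime_elem_not_unit)
  fix b c assume "b \<in> R_ring" "c \<in> R_ring" "p ^ m * q ^ n = b * c"
  from prime_elem_powers_factor_split[OF p q this(3)[symmetric]] obtain i j u v
    where ij: "i \<le> m" "j \<le> n" and uv: "is_unit u" "is_unit v"
      and b: "b = u * (p ^ i * q ^ j)" and c: "c = v * (p ^ (m - i) * q ^ (n - j))"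
    by blast
  have "p ^ i * q ^ j \<in> R_ring" "p ^ (m - i) * q ^ (n - j) \<in> R_ring"
    using \<open>b \<in> R_ring\<close> \<open>c \<in> R_ring\<close> by (simp_all add: b c mult_unit_in_R_ring_iff uv)
  with proper_factor_not_in_R ij have "i + j = 0 \<or> i + j = m + n" by fastforce
  then show "is_unit b \<or> is_unit c"
  proof
    assume "i + j = 0" then show ?thesis by (simp add: b uv)
  next
    assume "i + j = m + n" with ij show ?thesis by (simp add: c uv)
  qed
qed

lemma prime_elem_var_z: "prime_elem var_z"
  unfolding var_z_def by (rule prime_elem_linear_poly) auto

lemma prime_elem_var_x: "prime_elem var_x"
  unfolding var_x_def prime_elem_const_poly_iff by (rule prime_elem_linear_field_poly) simp

lemma prime_elem_P: "prime_elem P"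
proof -
  let ?X = "[:[:0, 1:]:] :: rat poly poly" and ?Y = "[:0, 1:] :: rat poly poly"
  have "prime_elem ?X"
    unfolding prime_elem_const_poly_iff by (rule prime_elem_linear_field_poly) simp
  moreover have "\<not> ?X dvd ?Y"
  proof
    assume "?X dvd ?Y"
    then have "[:0, 1:] dvd coeff ?Y 1" by (simp only: const_poly_dvd_iff)
    then show False by (simp add: is_unit_poly_iff)
  qed
  ultimately have "coprime (?X ^ 2) (?Y ^ 3)" by (simp add: prime_elem_imp_coprime)
  moreover have "P = [:?X ^ 2, ?Y ^ 3:]"
    by (simp add: P_def var_x_def var_y_def var_z_def power2_eq_square numeral_3_eq_3
        flip: pCons_one)
  ultimately show ?thesis using prime_elem_linear_poly[of "?Y ^ 3" "?X ^ 2"] by simp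
qed

lemma irreducible_N: "irreducible N"
proof (rule irreducibleI)
  show "N \<noteq> 0" "\<not> is_unit N" by (auto simp: N_eq is_unit_poly_iff)
  fix a b assume ab: "N = a * b"
  then have "a \<noteq> 0" "b \<noteq> 0" by (auto simp: N_eq)
  moreover have "degree N = 2" by (simp add: N_eq)
  ultimately have deg: "degree a + degree b = 2" using ab by (metis degree_mult_eq)
  have "lead_coeff a * lead_coeff b = lead_coeff N" by (simp add: ab lead_coeff_mult)
  also have "\<dots> = 1" by (simp add: N_eq)
  finally have units: "is_unit (lead_coeff a)" "is_unit (lead_coeff b)"
    by (metis is_unit_mult_iff one_dvd)+
  show "is_unit a \<or> is_unit b"
  proof (cases "degree a = 1")
    case True
    define r where "r = - (coeff a 0 div lead_coeff a)"
    have "poly N r = 0"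
      unfolding ab r_def using poly_degree_one_unit_root[OF True units(1)] by simp
    then have "r ^ 2 + [:0, 1:] = 0" by (simp add: N_eq power2_eq_square)
    then show ?thesis using square_plus_var_nonzero by blast
  next
    case False
    with deg have "degree a = 0 \<or> degree b = 0" by auto
    then show ?thesis using units by (metis degree_0_id is_unit_const_poly_iff)
  qed
qed

lemma prime_elem_N: "prime_elem N"
  using irreducible_N by (simp add: prime_elem_iff_irreducible)

lemma P_N_in_R_ring: "P * N \<in> R_ring"
proof -
  have "P * N = (var_z * var_x) * (var_z * var_x) + var_x * var_x * var_y
      + (var_z * var_y) * (var_z * var_y) * (var_z * var_y) + var_y * var_y * var_y * (var_z * var_y)"
    by (simp add: P_def N_def algebra_simps power2_eq_square power3_eq_cube)
  also have "\<dots> \<in> R_ring" by (intro R_ring.intros)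
  finally show ?thesis .
qed

lemma z_square_P_in_R_ring: "var_z ^ 2 * P \<in> R_ring"
proof -
  have "var_z ^ 2 * P =
      (var_z * var_x) * (var_z * var_x) + (var_z * var_y) * (var_z * var_y) * (var_z * var_y)"
    by (simp add: P_def algebra_simps power2_eq_square power3_eq_cube)
  also have "\<dots> \<in> R_ring" by (intro R_ring.intros)
  finally show ?thesis .
qed

lemma x_square_N_in_R_ring: "var_x ^ 2 * N \<in> R_ring"
proof -
  have "var_x ^ 2 * N = (var_z * var_x) * (var_z * var_x) + var_x * var_x * var_y"
    by (simp add: N_def algebra_simps power2_eq_square)
  also have "\<dots> \<in> R_ring" by (intro R_ring.intros)
  finally show ?thesis .
qed

lemma irreducible_in_R_ring_P_N: "irreducible_in R_ring (P * N)"
proof -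
  have "irreducible_in R_ring (P ^ 1 * N ^ 1)"
    by (rule irreducible_in_R_ring_prime_powers[OF prime_elem_P prime_elem_N])
       (auto simp: P_N_in_R_ring N_not_in_R_ring le_Suc_eq)
  then show ?thesis by simp
qed

lemma irreducible_in_R_ring_z_x: "irreducible_in R_ring (var_z * var_x)"
proof -
  have "irreducible_in R_ring (var_z ^ 1 * var_x ^ 1)"
    by (rule irreducible_in_R_ring_prime_powers[OF prime_elem_var_z prime_elem_var_x])
       (auto simp: R_ring.gen_zx z_not_in_R_ring le_Suc_eq)
  then show ?thesis by simp
qed

lemma irreducible_in_R_ring_z_square_P: "irreducible_in R_ring (var_z ^ 2 * P)"
proof -
  have "irreducible_in R_ring (var_z ^ 2 * P ^ 1)"
    by (rule irreducible_in_R_ring_prime_powers[OF prime_elem_var_z prime_elem_P])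
       (use z_square_P_in_R_ring z_not_in_R_ring z_square_not_in_R_ring in
         \<open>auto simp: le_Suc_eq numeral_2_eq_2\<close>)
  then show ?thesis by simp
qed

lemma irreducible_in_R_ring_x_square_N: "irreducible_in R_ring (var_x ^ 2 * N)"
proof -
  have "irreducible_in R_ring (var_x ^ 2 * N ^ 1)"
    by (rule irreducible_in_R_ring_prime_powers[OF prime_elem_var_x prime_elem_N])
       (use x_square_N_in_R_ring N_not_in_R_ring x_N_not_in_R_ring in
         \<open>auto simp: le_Suc_eq numeral_2_eq_2\<close>)
  then show ?thesis by simp
qed

theorem mainTheorem3:
  shows "\<not> half_factorial_in R_ring"
proof (rule not_half_factorial_in_if_lengths_differ)
  show "prod_list [P * N, var_z * var_x, var_z * var_x] =
        prod_list [var_z ^ 2 * P, var_x ^ 2 * N]"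
    by (simp add: algebra_simps power2_eq_square)
qed (use one_in_R_ring R_ring.mult irreducible_in_R_ring_P_N irreducible_in_R_ring_z_x
       irreducible_in_R_ring_z_square_P irreducible_in_R_ring_x_square_N in auto)

end
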